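(* Let $\mathcal C\subseteq\mathbb R^{h\times p}$ be closed and convex with $W^\star\in\mathcal C$, and $\mathcal T$ its feasible ball. Let $U\in\mathcal C$ and suppose $\nabla\mathcal L(U)=(H_1+H_2+H_3)\,\mathrm{vec}(U-W^\star)$ where $H_1,H_2,H_3\in\mathbb R^{hp\times hp}$, $H_1$ symmetric with $0\preceq H_1\preceq\alpha I_{hp}$, $\|H_2+H_3\|\le\varepsilon$, and $\inf_{\mathbf v\in\mathcal T,\mathbf v\ne0}\mathbf v^TH_1\mathbf v/\|\mathbf v\|_2^2\ge\beta$, with $\beta\ge10\varepsilon$. Then $\hat U=\mathcal P_{\mathcal C}(U-\frac1\alpha\nabla\mathcal L(U))$ satisfies $\|\hat U-W^\star\|_F^2\le(1-\frac{\beta}{2\alpha})\|U-W^\star\|_F^2$.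
   Context: Matrices in $\mathbb R^{h\times p}$ are identified with vectors in $\mathbb R^{hp}$ (vec stacks rows). $\mathcal P_{\mathcal C}$ is Frobenius projection. Feasible ball: $\mathcal T=\mathcal B^{h\times p}\cap\mathrm{cl}\{\alpha U: W^\star+U\in\mathcal C,\alpha\ge0\}$ with $\mathcal B^{h\times p}$ the unit Frobenius ball. $\|\cdot\|$ is the spectral norm. *)

theory Defs
  imports "HOL-Analysis.Analysis"
begin

text \<open>Matrices in R^{h x p} are modelled as real^'p^'h (rows indexed by 'h);
  the library norm on this type is the Frobenius norm.
  vec stacks rows: index (i,j) of R^{hp} is entry i,j.\<close>

definition vecm :: "real^'p^'h \<Rightarrow> real^('h \<times> 'p)" where
  "vecm U = (\<chi> ij. U $ fst ij $ snd ij)"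

definition proj_C :: "(real^'p^'h) set \<Rightarrow> real^'p^'h \<Rightarrow> real^'p^'h" where
  "proj_C C X = closest_point C X"

definition feasible_ball :: "(real^'p^'h) set \<Rightarrow> real^'p^'h \<Rightarrow> (real^'p^'h) set" where
  "feasible_ball C W = cball 0 1 \<inter> closure {a *\<^sub>R V | a V. W + V \<in> C \<and> a \<ge> 0}"

definition spec_norm :: "real^'n^'n \<Rightarrow> real" where
  "spec_norm M = onorm (\<lambda>x. M *v x)"

definition loewner_le :: "real^'n^'n \<Rightarrow> real^'n^'n \<Rightarrow> bool" where
  "loewner_le A B \<longleftrightarrow> (\<forall>x. 0 \<le> x \<bullet> ((B - A) *v x))"

end

theory Submission imports Defs begin

text \<open>Write \<open>d = vec(U - W)\<close> and \<open>E = H\<^sub>2 + H\<^sub>3\<close>. Before projecting, the step error is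
  \<open>(d - H\<^sub>1 d/\<alpha>) - E d/\<alpha>\<close>. Since \<open>0 \<preceq> H\<^sub>1 \<preceq> \<alpha>I\<close> gives \<open>\<parallel>H\<^sub>1 d\<parallel>\<^sup>2 \<le> \<alpha> d\<^sup>T H\<^sub>1 d\<close>, the first
  part has squared norm at most \<open>\<parallel>d\<parallel>\<^sup>2 - d\<^sup>T H\<^sub>1 d/\<alpha> \<le> (1 - \<beta>/\<alpha>)\<parallel>d\<parallel>\<^sup>2\<close>, where the curvature
  bound applies because \<open>(U - W)/\<parallel>U - W\<parallel>\<close> lies in the feasible ball. The perturbation has norm
  at most \<open>\<epsilon>\<parallel>d\<parallel>/\<alpha> \<le> \<beta>\<parallel>d\<parallel>/(10\<alpha>)\<close>, and the projection onto \<open>C\<close> does not increase the distance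
  to \<open>W \<in> C\<close>. The claim reduces to \<open>(\<surd>(1-x) + x/10)\<^sup>2 \<le> 1 - x/2\<close> for \<open>0 \<le> x \<le> 1\<close>.\<close>

lemma vecm_inner: "vecm X \<bullet> vecm Y = X \<bullet> Y"
  unfolding vecm_def inner_vec_def
  by (simp add: UNIV_Times_UNIV[symmetric] sum.cartesian_product split_beta del: UNIV_Times_UNIV)

lemma norm_vecm: "norm (vecm X) = norm X"
  by (simp add: norm_eq_sqrt_inner vecm_inner)

lemma vecm_diff: "vecm (X - Y) = vecm X - vecm Y"
  by (simp add: vecm_def vec_eq_iff)

lemma vecm_scaleR: "vecm (c *\<^sub>R X) = c *\<^sub>R vecm X"
  by (simp add: vecm_def vec_eq_iff)

lemma spec_norm_nonneg: "0 \<le> spec_norm M"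
  unfolding spec_norm_def by (rule onorm_pos_le[OF matrix_vector_mul_bounded_linear])

lemma norm_matrix_vector_le_spec_norm: "norm (M *v x) \<le> spec_norm M * norm x"
  unfolding spec_norm_def by (rule onorm[OF matrix_vector_mul_bounded_linear])

lemma loewner_le_zero_iff: "loewner_le 0 H \<longleftrightarrow> (\<forall>z. 0 \<le> z \<bullet> (H *v z))"
  by (simp add: loewner_le_def)

lemma loewner_le_scaled_identity_iff:
  "loewner_le H (\<alpha> *\<^sub>R mat 1) \<longleftrightarrow> (\<forall>z. z \<bullet> (H *v z) \<le> \<alpha> * (z \<bullet> z))"
  by (simp add: loewner_le_def matrix_vector_mult_diff_rdistrib inner_diff_right
      scaleR_matrix_vector_assoc[symmetric])

lemma symmetric_inner_matrix_vector:
  assumes "transpose H = H"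
  shows "x \<bullet> (H *v y) = (H *v x) \<bullet> (y::real^'n)"
  by (metis assms dot_lmul_matrix transpose_matrix_vector)

text \<open>Cauchy--Schwarz for the semi-inner product of a positive semidefinite matrix, via the
  nonnegative quadratic \<open>t \<mapsto> (x + t y)\<^sup>T M (x + t y)\<close>.\<close>

lemma psd_cauchy_schwarz:
  fixes M :: "real^'n^'n"
  assumes sym: "transpose M = M" and psd: "\<And>z. 0 \<le> z \<bullet> (M *v z)"
  shows "(x \<bullet> (M *v y))\<^sup>2 \<le> (x \<bullet> (M *v x)) * (y \<bullet> (M *v y))"
proof -
  define a where "a = x \<bullet> (M *v x)"
  define b where "b = x \<bullet> (M *v y)"
  define c where "c = y \<bullet> (M *v y)"
  have quadratic: "0 \<le> a + 2 * b * t + c * t\<^sup>2" for t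
  proof -
    have "y \<bullet> (M *v x) = b"
      unfolding b_def using symmetric_inner_matrix_vector[OF sym, of y x] by (simp add: inner_commute)
    then have "(x + t *\<^sub>R y) \<bullet> (M *v (x + t *\<^sub>R y)) = a + 2 * b * t + c * t\<^sup>2"
      by (simp add: a_def b_def c_def matrix_vector_right_distrib matrix_vector_mult_scaleR
          inner_add_left inner_add_right power2_eq_square algebra_simps)
    then show ?thesis using psd by metis
  qed
  have "b\<^sup>2 \<le> a * c"
  proof (cases "c = 0")
    case True
    have "b = 0"
    proof (rule ccontr)
      assume "b \<noteq> 0"
      then have "a + 2 * b * (- (a + 1) / (2 * b)) = -1" by (simp add: field_simps)
      then show False using quadratic[of "- (a + 1) / (2 * b)"] True by simp
    qed
    then show ?thesis using True by simp
  next
    case False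
    then have c_pos: "c > 0" using psd[of y] c_def by simp
    have "a + 2 * b * (- b / c) + c * (- b / c)\<^sup>2 = a - b\<^sup>2 / c"
      using c_pos by (simp add: field_simps power2_eq_square)
    then have "b\<^sup>2 / c \<le> a" using quadratic[of "- b / c"] by simp
    then show ?thesis using c_pos by (simp add: field_simps mult.commute)
  qed
  then show ?thesis by (simp add: a_def b_def c_def)
qed

text \<open>Apply Cauchy--Schwarz to \<open>d\<close> and \<open>Hd\<close>: \<open>\<parallel>Hd\<parallel>\<^sup>4 = (d\<^sup>T H (Hd))\<^sup>2 \<le> (d\<^sup>T H d) (Hd)\<^sup>T H (Hd)
  \<le> (d\<^sup>T H d) \<alpha> \<parallel>Hd\<parallel>\<^sup>2\<close>.\<close>

lemma norm_psd_matrix_vector_sq_le: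
  fixes H :: "real^'n^'n"
  assumes sym: "transpose H = H" and "loewner_le 0 H" and "loewner_le H (\<alpha> *\<^sub>R mat 1)"
  shows "(norm (H *v d))\<^sup>2 \<le> \<alpha> * (d \<bullet> (H *v d))"
proof -
  have psd: "\<And>z. 0 \<le> z \<bullet> (H *v z)" and upper: "\<And>z. z \<bullet> (H *v z) \<le> \<alpha> * (z \<bullet> z)"
    using assms(2,3) by (simp_all add: loewner_le_zero_iff loewner_le_scaled_identity_iff)
  define s where "s = (norm (H *v d))\<^sup>2"
  define p where "p = d \<bullet> (H *v d)"
  have Hd: "d \<bullet> (H *v (H *v d)) = s"
    unfolding s_def using symmetric_inner_matrix_vector[OF sym, of d "H *v d"]
    by (simp add: power2_norm_eq_inner)
  have "s\<^sup>2 \<le> p * ((H *v d) \<bullet> (H *v (H *v d)))"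
    using psd_cauchy_schwarz[OF sym psd, of d "H *v d"] by (simp add: Hd p_def)
  also have "\<dots> \<le> p * (\<alpha> * s)"
    using upper[of "H *v d"] psd[of d] unfolding p_def s_def
    by (intro mult_left_mono) (simp_all add: power2_norm_eq_inner)
  finally have s_sq: "s * s \<le> (\<alpha> * p) * s" by (simp add: power2_eq_square mult_ac)
  have "s \<le> \<alpha> * p"
  proof (cases "s = 0")
    case True
    have "0 \<le> \<alpha> * p"
    proof (cases "0 \<le> \<alpha>")
      case True
      then show ?thesis using psd[of d] by (simp add: p_def)
    next
      case False
      then have "p \<le> 0" using upper[of d] mult_nonpos_nonneg[of \<alpha> "d \<bullet> d"] by (simp add: p_def)
      then have "p = 0" using psd[of d] by (simp add: p_def)
      then show ?thesis by simp
    qed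
    then show ?thesis using True by simp
  next
    case False
    then show ?thesis using s_sq mult_right_le_imp_le[of s s "\<alpha> * p"] by (simp add: s_def)
  qed
  then show ?thesis by (simp add: s_def p_def)
qed

lemma gradient_step_norm_sq_le:
  fixes H :: "real^'n^'n"
  assumes "transpose H = H" and "loewner_le 0 H" and "loewner_le H (\<alpha> *\<^sub>R mat 1)" and "\<alpha> > 0"
  shows "(norm (d - (1 / \<alpha>) *\<^sub>R (H *v d)))\<^sup>2 \<le> (norm d)\<^sup>2 - (d \<bullet> (H *v d)) / \<alpha>"
proof -
  define p where "p = d \<bullet> (H *v d)"
  have "(norm (d - (1 / \<alpha>) *\<^sub>R (H *v d)))\<^sup>2
      = (norm d)\<^sup>2 - 2 * p / \<alpha> + (norm (H *v d))\<^sup>2 / \<alpha>\<^sup>2"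
    unfolding power2_norm_eq_inner p_def using \<open>\<alpha> > 0\<close>
    by (simp add: inner_diff_left inner_diff_right inner_commute power2_eq_square field_simps)
  also have "\<dots> \<le> (norm d)\<^sup>2 - 2 * p / \<alpha> + (\<alpha> * p) / \<alpha>\<^sup>2"
    using norm_psd_matrix_vector_sq_le[OF assms(1-3)] by (simp add: p_def divide_right_mono)
  also have "\<dots> = (norm d)\<^sup>2 - p / \<alpha>" using \<open>\<alpha> > 0\<close> by (simp add: power2_eq_square field_simps)
  finally show ?thesis by (simp add: p_def)
qed

lemma norm_proj_C_diff_le:
  assumes "closed C" and "convex C" and "W \<in> C"
  shows "norm (proj_C C Y - W) \<le> norm (Y - W)"
  using closest_point_lipschitz[OF assms(2,1), of Y W] closest_point_self[OF assms(3)] assms(3)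
  by (auto simp: proj_C_def dist_norm)

lemma projected_gradient_step_error:
  assumes "closed C" and "convex C" and "W \<in> C"
    and grad: "vecm G = (H + E) *v vecm (U - W)"
  shows "norm (proj_C C (U - c *\<^sub>R G) - W)
    \<le> norm (vecm (U - W) - c *\<^sub>R (H *v vecm (U - W))) + norm (c *\<^sub>R (E *v vecm (U - W)))"
    (is "_ \<le> norm ?A + norm ?B")
proof -
  have "U - c *\<^sub>R G - W = (U - W) - c *\<^sub>R G" by (simp add: algebra_simps)
  then have "vecm (U - c *\<^sub>R G - W) = vecm (U - W) - c *\<^sub>R vecm G"
    by (simp only: vecm_diff vecm_scaleR)
  also have "\<dots> = ?A - ?B"
    by (simp add: grad matrix_vector_mult_add_rdistrib scaleR_add_right)
  finally have "norm (U - c *\<^sub>R G - W) = norm (?A - ?B)" by (metis norm_vecm)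
  then show ?thesis
    using norm_proj_C_diff_le[OF assms(1-3), of "U - c *\<^sub>R G"] norm_triangle_ineq4[of ?A ?B]
    by linarith
qed

lemma normalized_direction_in_feasible_ball:
  assumes "U \<in> C" and "U \<noteq> W"
  shows "(1 / norm (U - W)) *\<^sub>R (U - W) \<in> feasible_ball C W"
proof -
  let ?V = "(1 / norm (U - W)) *\<^sub>R (U - W)"
  have "W + (U - W) \<in> C" "0 \<le> 1 / norm (U - W)" using assms by simp_all
  then have "?V \<in> {a *\<^sub>R V | a V. W + V \<in> C \<and> a \<ge> 0}" by blast
  moreover have "norm ?V = 1" using assms by simp
  ultimately show ?thesis unfolding feasible_ball_def using closure_subset by fastforce
qed

text \<open>The curvature bound on the feasible ball extends by homogeneity to every feasible
  difference \<open>U - W\<close>.\<close>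

lemma restricted_curvature:
  assumes "U \<in> C"
    and curv: "\<forall>V \<in> feasible_ball C W. V \<noteq> 0 \<longrightarrow>
           \<beta> \<le> (vecm V \<bullet> (H *v vecm V)) / (norm (vecm V))\<^sup>2"
  shows "\<beta> * (norm (U - W))\<^sup>2 \<le> vecm (U - W) \<bullet> (H *v vecm (U - W))"
proof (cases "U = W")
  case True
  then show ?thesis by (simp add: vecm_def matrix_vector_mult_def inner_vec_def)
next
  case False
  define n where "n = norm (U - W)"
  define V where "V = (1 / n) *\<^sub>R (U - W)"
  have n_pos: "n > 0" using False by (simp add: n_def)
  have "V \<in> feasible_ball C W" "V \<noteq> 0"
    using normalized_direction_in_feasible_ball[OF \<open>U \<in> C\<close> False] n_pos
    by (simp_all add: V_def n_def)
  then have "\<beta> \<le> (vecm V \<bullet> (H *v vecm V)) / (norm (vecm V))\<^sup>2" using curv by blast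
  also have "vecm V = (1 / n) *\<^sub>R vecm (U - W)" by (simp add: V_def vecm_scaleR)
  also have "norm ((1 / n) *\<^sub>R vecm (U - W)) = 1" using n_pos by (simp add: norm_vecm n_def)
  also have "((1 / n) *\<^sub>R vecm (U - W)) \<bullet> (H *v ((1 / n) *\<^sub>R vecm (U - W)))
      = (vecm (U - W) \<bullet> (H *v vecm (U - W))) / n\<^sup>2"
    by (simp add: matrix_vector_mult_scaleR power2_eq_square)
  finally show ?thesis using n_pos by (simp add: pos_le_divide_eq n_def)
qed

lemma perturbed_contraction:
  fixes a b n x :: real
  assumes "0 \<le> x" "0 \<le> a" "0 \<le> n"
    and a_sq: "a\<^sup>2 \<le> (1 - x) * n\<^sup>2" and b: "\<bar>b\<bar> \<le> x / 10 * n"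
  shows "(a + b)\<^sup>2 \<le> (1 - x / 2) * n\<^sup>2"
proof -
  have a_sq': "a\<^sup>2 \<le> n\<^sup>2 - x * n\<^sup>2" using a_sq by (simp add: left_diff_distrib)
  have xn: "0 \<le> x * n\<^sup>2" using \<open>0 \<le> x\<close> by simp
  then have "a\<^sup>2 \<le> n\<^sup>2" using a_sq' by linarith
  then have "a \<le> n" using \<open>0 \<le> n\<close> by (rule power2_le_imp_le)
  then have "a * \<bar>b\<bar> \<le> n * (x / 10 * n)"
    using b \<open>0 \<le> a\<close> \<open>0 \<le> n\<close> by (intro mult_mono) simp_all
  moreover have "n * (x / 10 * n) = x * n\<^sup>2 / 10" by (simp add: power2_eq_square)
  moreover have "a * b \<le> a * \<bar>b\<bar>" using \<open>0 \<le> a\<close> by (simp add: mult_left_mono)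
  ultimately have ab: "a * b \<le> x * n\<^sup>2 / 10" by linarith
  have "x * n\<^sup>2 \<le> n\<^sup>2" using a_sq' zero_le_power2[of a] by linarith
  then have "x * (x * n\<^sup>2) \<le> x * n\<^sup>2" using mult_left_mono \<open>0 \<le> x\<close> by fastforce
  moreover have "b\<^sup>2 \<le> (x / 10 * n)\<^sup>2"
    using b by (metis power2_abs power_mono abs_ge_zero)
  ultimately have bb: "b\<^sup>2 \<le> x * n\<^sup>2 / 100"
    by (simp add: power2_eq_square algebra_simps)
  have "(a + b)\<^sup>2 = a\<^sup>2 + 2 * (a * b) + b\<^sup>2" by (simp add: power2_sum)
  also have "\<dots> \<le> n\<^sup>2 - x * n\<^sup>2 / 2" using a_sq' ab bb xn by linarith
  finally show ?thesis by (simp add: left_diff_distrib)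
qed

theorem mainTheorem9:
  fixes C :: "(real^'p^'h) set" and W U G :: "real^'p^'h"
    and H1 H2 H3 :: "real^('h \<times> 'p)^('h \<times> 'p)"
    and \<alpha> \<beta> \<epsilon> :: real
  assumes "closed C" and "convex C" and "W \<in> C" and "U \<in> C"
    and grad: "vecm G = (H1 + H2 + H3) *v vecm (U - W)"
    and "transpose H1 = H1"
    and "\<alpha> > 0"
    and "loewner_le 0 H1" and "loewner_le H1 (\<alpha> *\<^sub>R mat 1)"
    and "spec_norm (H2 + H3) \<le> \<epsilon>"
    and "\<forall>V \<in> feasible_ball C W. V \<noteq> 0 \<longrightarrow>
           \<beta> \<le> (vecm V \<bullet> (H1 *v vecm V)) / (norm (vecm V))\<^sup>2"
    and "\<beta> \<ge> 10 * \<epsilon>"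
  shows "(norm (proj_C C (U - (1 / \<alpha>) *\<^sub>R G) - W))\<^sup>2
           \<le> (1 - \<beta> / (2 * \<alpha>)) * (norm (U - W))\<^sup>2"
proof -
  define n where "n = norm (U - W)"
  define x where "x = \<beta> / \<alpha>"
  define d where "d = vecm (U - W)"
  define A where "A = d - (1 / \<alpha>) *\<^sub>R (H1 *v d)"
  define B where "B = (1 / \<alpha>) *\<^sub>R ((H2 + H3) *v d)"
  have step: "norm (proj_C C (U - (1 / \<alpha>) *\<^sub>R G) - W) \<le> norm A + norm B"
    using projected_gradient_step_error[OF assms(1-3) grad[unfolded add.assoc], of "1 / \<alpha>"]
    by (simp add: A_def B_def d_def)
  have "(norm A)\<^sup>2 \<le> (1 - x) * n\<^sup>2"
  proof -
    have "\<beta> * n\<^sup>2 \<le> d \<bullet> (H1 *v d)"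
      unfolding d_def n_def by (rule restricted_curvature[OF \<open>U \<in> C\<close> assms(11)])
    then have "x * n\<^sup>2 \<le> d \<bullet> (H1 *v d) / \<alpha>" using \<open>\<alpha> > 0\<close> by (simp add: x_def field_simps)
    then show ?thesis using gradient_step_norm_sq_le[OF assms(6,8,9,7), of d]
      by (simp add: A_def d_def n_def norm_vecm algebra_simps)
  qed
  moreover have "norm B \<le> x / 10 * n"
  proof -
    have "norm ((H2 + H3) *v d) \<le> \<epsilon> * n"
      using norm_matrix_vector_le_spec_norm[of "H2 + H3" d] \<open>spec_norm (H2 + H3) \<le> \<epsilon>\<close>
      by (simp add: d_def n_def norm_vecm) (meson mult_right_mono norm_ge_zero order_trans)
    moreover have "\<epsilon> * n \<le> \<beta> / 10 * n" using \<open>\<beta> \<ge> 10 * \<epsilon>\<close>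
      by (intro mult_right_mono) (simp_all add: n_def)
    ultimately show ?thesis using \<open>\<alpha> > 0\<close> by (simp add: B_def x_def divide_simps)
  qed
  moreover have "0 \<le> x"
    using spec_norm_nonneg[of "H2 + H3"] assms(7,10,12) by (simp add: x_def)
  ultimately have "(norm A + norm B)\<^sup>2 \<le> (1 - x / 2) * n\<^sup>2"
    by (intro perturbed_contraction) (simp_all add: n_def)
  moreover have "(norm (proj_C C (U - (1 / \<alpha>) *\<^sub>R G) - W))\<^sup>2 \<le> (norm A + norm B)\<^sup>2"
    using step by (intro power_mono) simp_all
  ultimately have "(norm (proj_C C (U - (1 / \<alpha>) *\<^sub>R G) - W))\<^sup>2 \<le> (1 - x / 2) * n\<^sup>2"
    by (rule order_trans[rotated])
  moreover have "x / 2 = \<beta> / (2 * \<alpha>)" by (simp add: x_def)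
  ultimately show ?thesis by (simp only: n_def)
qed

end
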